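(* Let $n\ge2$ and let $f:\mathbb R^n\to\mathbb R^n$ be a continuous injective map such that $\overline{f(A^\circ)}=\big(\overline{f(A)}\big)^\circ$ for every $A\in\mathcal K_0^n$. Then $f$ is an orthogonal linear map.
   Context: $\mathcal K_0^n$: closed convex subsets of $\mathbb R^n$ containing $0$. Polar: $A^\circ=\{x:\sup_{a\in A}\langle a,x\rangle\le1\}$. $f(A)=\{f(a):a\in A\}$ and the bar denotes topological closure in $\mathbb R^n$. *)

theory Defs
  imports "HOL-Analysis.Analysis"
begin

text \<open>Polar of a set: the set of x with sup over a in A of a.x at most 1.
  Written pointwise (equivalent to the sup formulation, also for empty A).\<close>
definition polar :: "('a::real_inner) set \<Rightarrow> 'a set" where
  "polar A = {x. \<forall>a\<in>A. inner a x \<le> 1}"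

definition K0 :: "('a::real_normed_vector) set set" where
  "K0 = {A. closed A \<and> convex A \<and> 0 \<in> A}"

end

theory Submission
  imports Defs "HOL-Homology.Invariance_of_Domain"
begin

text \<open>Testing the hypothesis on the whole space gives \<open>f 0 = 0\<close>. Segments \<open>[0, a]\<close> and
  half-spaces \<open>{x. a \<bullet> x \<le> 1}\<close> are polar to each other, so \<open>f\<close> maps \<open>[0, a]\<close> onto a convex
  arc, i.e. onto \<open>[0, f a]\<close>, and \<open>a \<bullet> x \<le> 1\<close> holds iff \<open>f a \<bullet> f x \<le> 1\<close>. Consequently \<open>f\<close>
  maps rays into rays, preserves the relation \<open>a \<bullet> x = 1\<close>, and preserves orthogonality to
  unit vectors. So \<open>f\<close> maps the standard basis to an orthonormal basis, and each coordinate
  of \<open>f x\<close> in it is obtained from the corresponding coordinate of \<open>x\<close> by one function \<open>H\<close>,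
  the profile of \<open>f\<close> along a unit ray. Testing \<open>a \<bullet> x = 1\<close> on vectors supported on two coordinates makes \<open>H\<close> additive,
  hence the identity, and \<open>f\<close> preserves inner products.\<close>

lemma zero_in_polar: "0 \<in> polar A"
  by (simp add: polar_def)

lemma convex_polar: "convex (polar A)"
  unfolding polar_def convex_def
  by (auto simp: inner_add_right) (smt (verit) mult_left_le mult_nonneg_nonneg)

lemma polar_UNIV: "polar (UNIV :: 'a::real_inner set) = {0}"
proof -
  have "x = 0" if "x \<in> polar UNIV" for x :: 'a
  proof (rule ccontr)
    assume "x \<noteq> 0"
    moreover have "((2 / (x \<bullet> x)) *\<^sub>R x) \<bullet> x \<le> 1"
      using that unfolding polar_def by blast
    ultimately show False by simp
  qed
  then show ?thesis using zero_in_polar by blast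
qed

lemma polar_closed_segment:
  fixes a :: "'a::real_inner"
  shows "polar (closed_segment 0 a) = {x. a \<bullet> x \<le> 1}"
proof -
  have "(\<forall>b\<in>closed_segment 0 a. b \<bullet> x \<le> 1) \<longleftrightarrow> a \<bullet> x \<le> 1" for x
  proof
    show "\<forall>b\<in>closed_segment 0 a. b \<bullet> x \<le> 1 \<Longrightarrow> a \<bullet> x \<le> 1" by simp
    show "a \<bullet> x \<le> 1 \<Longrightarrow> \<forall>b\<in>closed_segment 0 a. b \<bullet> x \<le> 1"
      by (auto simp: closed_segment_def) (metis mult.commute mult_le_one)
  qed
  then show ?thesis by (auto simp: polar_def)
qed

lemma polar_halfspace_le_one:
  fixes a :: "'a::real_inner"
  shows "polar {x. a \<bullet> x \<le> 1} = closed_segment 0 a"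
proof
  show "closed_segment 0 a \<subseteq> polar {x. a \<bullet> x \<le> 1}"
    by (auto simp: polar_def closed_segment_def inner_commute mult.commute[of _ "_ \<bullet> a"] mult_le_one)
next
  show "polar {x. a \<bullet> x \<le> 1} \<subseteq> closed_segment 0 a"
  proof
    fix z assume "z \<in> polar {x. a \<bullet> x \<le> 1}"
    then have test: "x \<bullet> z \<le> 1" if "a \<bullet> x \<le> 1" for x
      using that by (auto simp: polar_def inner_commute)
    show "z \<in> closed_segment 0 a"
    proof (cases "a = 0")
      case True
      then have "z \<in> polar UNIV" using test by (auto simp: polar_def inner_commute)
      then show ?thesis using True polar_UNIV by auto
    next
      case False
      then have aa: "a \<bullet> a > 0" by simp
      define l where "l = (z \<bullet> a) / (a \<bullet> a)"
      define w where "w = z - l *\<^sub>R a"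
      have wa: "a \<bullet> w = 0"
        using aa by (simp add: w_def l_def inner_diff_right inner_commute)
      have "w = 0"
      proof (rule ccontr)
        assume "w \<noteq> 0"
        have "(2 / (w \<bullet> w)) *\<^sub>R w \<bullet> z \<le> 1" using test[of "(2 / (w \<bullet> w)) *\<^sub>R w"] wa by simp
        moreover have "w \<bullet> z = w \<bullet> w"
          using wa by (simp add: w_def inner_diff_left inner_commute)
        ultimately show False using \<open>w \<noteq> 0\<close> by simp
      qed
      then have z: "z = l *\<^sub>R a" by (simp add: w_def)
      have "l \<le> 1"
        using test[of "(1 / (a \<bullet> a)) *\<^sub>R a"] aa by (simp add: z)
      moreover have "0 \<le> l"
      proof (rule ccontr)
        assume "\<not> 0 \<le> l"
        then have "a \<bullet> ((2 / (l * (a \<bullet> a))) *\<^sub>R a) \<le> 1"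
          using aa by (simp add: divide_neg_pos mult_neg_pos)
        from test[OF this] show False using aa \<open>\<not> 0 \<le> l\<close> by (simp add: z)
      qed
      ultimately show ?thesis using z by (auto simp: closed_segment_def)
    qed
  qed
qed

lemma closed_segment_0_in_K0: "closed_segment 0 a \<in> K0"
  by (simp add: K0_def)

lemma halfspace_le_one_in_K0: "{x. a \<bullet> x \<le> 1} \<in> K0"
  by (simp add: K0_def closed_halfspace_le convex_halfspace_le)

lemma arc_image_subset_connected:
  fixes h :: "real \<Rightarrow> 'a::t2_space"
  assumes "continuous_on {0..1} h" "inj_on h {0..1}"
    and "connected S" "S \<subseteq> h ` {0..1}" "h 0 \<in> S" "h 1 \<in> S"
  shows "h ` {0..1} \<subseteq> S"
proof -
  define g where "g = inv_into {0..1} h"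
  have "continuous_on (h ` {0..1}) g"
    unfolding g_def using assms(1,2) by (intro continuous_on_inv) auto
  then have "connected (g ` S)"
    using assms(3,4) by (meson connected_continuous_image continuous_on_subset)
  moreover have "0 \<in> g ` S" "1 \<in> g ` S"
    using assms(2,5,6) unfolding g_def by (force intro: image_eqI[of _ _ "h _"])+
  ultimately have "{0..1} \<subseteq> g ` S" by (rule connected_contains_Icc)
  then have "h ` {0..1} \<subseteq> h ` g ` S" by blast
  also have "\<dots> = S"
    using assms(4) unfolding g_def by (force simp: image_image f_inv_into_f)
  finally show ?thesis .
qed

lemma orthonormal_image_Basis_expansion:
  fixes F :: "'a::euclidean_space \<Rightarrow> 'a"
  assumes orthonormal: "\<And>b b'. b \<in> Basis \<Longrightarrow> b' \<in> Basis \<Longrightarrow> F b \<bullet> F b' = (if b = b' then 1 else 0)"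
  shows "z = (\<Sum>b\<in>Basis. (z \<bullet> F b) *\<^sub>R F b)"
proof -
  define L where "L x = (\<Sum>b\<in>Basis. (x \<bullet> b) *\<^sub>R F b)" for x
  have inner_L: "L x \<bullet> F b' = x \<bullet> b'" if "b' \<in> Basis" for x b'
    using that by (simp add: L_def inner_sum_left orthonormal if_distrib cong: if_cong)
  have "orthogonal_transformation L"
    unfolding orthogonal_transformation_def
  proof
    show "linear L"
      by (auto simp: L_def linear_iff inner_add_left scaleR_add_left sum.distrib scaleR_sum_right)
    show "\<forall>v w. L v \<bullet> L w = v \<bullet> w"
    proof (intro allI)
      fix v w
      have "L v \<bullet> L w = (\<Sum>b\<in>Basis. (w \<bullet> b) * (L v \<bullet> F b))"
        by (simp add: L_def[of w] inner_sum_right)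
      also have "\<dots> = v \<bullet> w"
        by (simp add: inner_L euclidean_inner[of v w] mult.commute)
      finally show "L v \<bullet> L w = v \<bullet> w" .
    qed
  qed
  then obtain w where w: "z = L w" using orthogonal_transformation_surj by (metis surjD)
  then show ?thesis by (simp add: inner_L) (simp add: L_def)
qed

lemma orthonormal_image_Basis_eqI:
  fixes F :: "'a::euclidean_space \<Rightarrow> 'a"
  assumes "\<And>b b'. b \<in> Basis \<Longrightarrow> b' \<in> Basis \<Longrightarrow> F b \<bullet> F b' = (if b = b' then 1 else 0)"
    and "\<And>b. b \<in> Basis \<Longrightarrow> y \<bullet> F b = z \<bullet> F b"
  shows "y = z"
  using orthonormal_image_Basis_expansion[OF assms(1)] assms(2) by (metis (no_types, lifting) sum.cong)

lemma orthonormal_image_Basis_inner: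
  fixes F :: "'a::euclidean_space \<Rightarrow> 'a"
  assumes "\<And>b b'. b \<in> Basis \<Longrightarrow> b' \<in> Basis \<Longrightarrow> F b \<bullet> F b' = (if b = b' then 1 else 0)"
  shows "y \<bullet> z = (\<Sum>b\<in>Basis. (y \<bullet> F b) * (z \<bullet> F b))"
  using arg_cong[OF orthonormal_image_Basis_expansion[OF assms, of z], of "inner y"]
  by (simp add: inner_sum_right mult.commute)

lemma additive_nonneg_eq_id:
  fixes H :: "real \<Rightarrow> real"
  assumes nonneg: "\<And>c. c \<ge> 0 \<Longrightarrow> H c \<ge> 0" and one: "H 1 = 1"
    and add: "\<And>x y. x \<ge> 0 \<Longrightarrow> y \<ge> 0 \<Longrightarrow> H (x + y) = H x + H y"
    and "c \<ge> 0"
  shows "H c = c"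
proof -
  have mono: "H x \<le> H y" if "0 \<le> x" "x \<le> y" for x y
    using add[of x "y - x"] nonneg[of "y - x"] that by simp
  have mult: "H (real n * x) = real n * H x" if "x \<ge> 0" for n x
  proof (induction n)
    case 0
    show ?case using add[of 0 0] by simp
  next
    case (Suc n)
    have "H (real (Suc n) * x) = H (real n * x) + H x"
      using add[of "real n * x" x] that by (simp add: algebra_simps)
    then show ?case using Suc by (simp add: algebra_simps)
  qed
  have "\<bar>H c - c\<bar> \<le> 1 / real m" if "m > 0" for m :: nat
  proof -
    define k where "k = nat \<lfloor>real m * c\<rfloor>"
    have k: "real k \<le> real m * c" "real m * c \<le> real k + 1"
      using \<open>c \<ge> 0\<close> by (simp_all add: k_def)
    have "real k \<le> H (real m * c)" "H (real m * c) \<le> real k + 1"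
      using mono[OF _ k(1)] mono[OF _ k(2)] mult[of 1 k] mult[of 1 "k + 1"] one \<open>c \<ge> 0\<close> by (simp_all add: add.commute)
    then have "\<bar>real m * H c - real m * c\<bar> \<le> 1"
      using mult[OF \<open>c \<ge> 0\<close>, of m] k by (simp add: abs_le_iff)
    moreover have "\<bar>real m * H c - real m * c\<bar> = real m * \<bar>H c - c\<bar>"
      by (simp add: abs_mult flip: right_diff_distrib)
    ultimately have "real m * \<bar>H c - c\<bar> \<le> 1" by simp
    then show ?thesis using that by (simp add: field_simps)
  qed
  then have "\<bar>H c - c\<bar> \<le> 0"
    by (metis inverse_eq_divide less_imp_le nat_approx_posE order.trans
        zero_less_Suc linorder_not_less)
  then show ?thesis by simp
qed

lemma exists_Basis_neq:
  assumes "DIM('a::euclidean_space) \<ge> 2" "b \<in> Basis"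
  shows "\<exists>b'\<in>(Basis :: 'a set). b' \<noteq> b"
proof (rule ccontr)
  assume "\<not> ?thesis"
  then have "(Basis :: 'a set) \<subseteq> {b}" by blast
  then have "DIM('a) \<le> 1" using card_mono[of "{b}" Basis] by simp
  with assms(1) show False by simp
qed

locale polar_preserving =
  fixes f :: "'a::euclidean_space \<Rightarrow> 'a"
  assumes continuous: "continuous_on UNIV f"
    and inj: "inj f"
    and closure_image_polar: "A \<in> K0 \<Longrightarrow> closure (f ` polar A) = polar (closure (f ` A))"
begin

lemma fixes_zero: "f 0 = 0"
proof -
  have "{f 0} = polar (closure (range f))"
    using closure_image_polar[of UNIV] by (simp add: K0_def polar_UNIV)
  then show ?thesis using zero_in_polar by (metis singletonD)
qed

lemma closed_image_segment: "closed (f ` closed_segment 0 a)"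
  by (meson compact_continuous_image compact_imp_closed compact_segment continuous
      continuous_on_subset subset_UNIV)

lemma image_closed_segment: "f ` closed_segment 0 a = closed_segment 0 (f a)"
proof
  have "f ` closed_segment 0 a = polar (closure (f ` {x. a \<bullet> x \<le> 1}))"
    using closure_image_polar[OF halfspace_le_one_in_K0]
    by (simp add: polar_halfspace_le_one closed_image_segment)
  then have "convex (f ` closed_segment 0 a)" by (simp add: convex_polar)
  then show subset: "closed_segment 0 (f a) \<subseteq> f ` closed_segment 0 a"
    using fixes_zero by (metis closed_segment_subset ends_in_segment image_eqI)
  define h where "h t = f (t *\<^sub>R a)" for t :: real
  have image_h: "h ` {0..1} = f ` closed_segment 0 a"
    by (simp add: h_def closed_segment_image_interval image_image)
  show "f ` closed_segment 0 a \<subseteq> closed_segment 0 (f a)"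
  proof (cases "a = 0")
    case True
    then show ?thesis by (simp add: fixes_zero)
  next
    case False
    have "continuous_on {0..1} h"
      unfolding h_def by (intro continuous_on_compose2[OF continuous] continuous_intros) auto
    moreover have "inj_on h {0..1}"
      using False by (auto simp: h_def inj_on_def dest: injD[OF inj])
    ultimately have "h ` {0..1} \<subseteq> closed_segment 0 (f a)"
      by (rule arc_image_subset_connected) (use subset image_h fixes_zero in \<open>auto simp: h_def\<close>)
    then show ?thesis by (simp add: image_h)
  qed
qed

lemma closure_image_halfspace: "closure (f ` {x. a \<bullet> x \<le> 1}) = {y. f a \<bullet> y \<le> 1}"
  using closure_image_polar[OF closed_segment_0_in_K0, of a]
  by (simp only: polar_closed_segment closed_image_segment image_closed_segment closure_closed
      closed_segment)

text \<open>The reverse implication uses invariance of domain: the image of the open half-space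
  \<open>a \<bullet> x > 1\<close> is open and misses the image of its complement, hence also its closure.\<close>

lemma inner_le_one_iff: "f a \<bullet> f x \<le> 1 \<longleftrightarrow> a \<bullet> x \<le> 1"
proof
  assume "a \<bullet> x \<le> 1"
  then have "f x \<in> closure (f ` {x. a \<bullet> x \<le> 1})" by (auto intro: closure_subset[THEN subsetD])
  then show "f a \<bullet> f x \<le> 1" by (simp add: closure_image_halfspace)
next
  assume fx: "f a \<bullet> f x \<le> 1"
  let ?U = "f ` {y. a \<bullet> y > 1}"
  have "open ?U"
    by (rule invariance_of_domain)
      (auto simp: open_halfspace_gt intro: continuous_on_subset[OF continuous] inj_on_subset[OF inj])
  moreover have "?U \<inter> f ` {x. a \<bullet> x \<le> 1} = {}" using injD[OF inj] by fastforce
  ultimately have "?U \<inter> {y. f a \<bullet> y \<le> 1} = {}"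
    by (simp add: open_Int_closure_eq_empty flip: closure_image_halfspace)
  then show "a \<bullet> x \<le> 1" using fx by (force simp: not_le[symmetric])
qed

lemma inner_eq_one:
  assumes "a \<bullet> x = 1"
  shows "f a \<bullet> f x = 1"
proof -
  have "((\<lambda>t. f (t *\<^sub>R a) \<bullet> f x) \<longlongrightarrow> f a \<bullet> f x) (at_right 1)"
    by (rule tendsto_eq_intros continuous_on_tendsto_compose[OF continuous] | simp)+
  moreover have "eventually (\<lambda>t. 1 \<le> f (t *\<^sub>R a) \<bullet> f x) (at_right 1)"
  proof (rule eventually_at_rightI[of 1 2])
    fix t :: real assume "t \<in> {1<..<2}"
    then have "\<not> (t *\<^sub>R a) \<bullet> x \<le> 1" using assms by simp
    then show "1 \<le> f (t *\<^sub>R a) \<bullet> f x" using inner_le_one_iff[of "t *\<^sub>R a" x] by linarith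
  qed simp
  ultimately have "1 \<le> f a \<bullet> f x" by (rule tendsto_lowerbound) simp
  then show ?thesis using assms inner_le_one_iff[of a x] by simp
qed

lemma image_scaleR_on_ray:
  assumes "0 \<le> t"
  shows "\<exists>l\<ge>0. f (t *\<^sub>R a) = l *\<^sub>R f a"
proof (cases "t \<le> 1")
  case True
  then have "t *\<^sub>R a \<in> closed_segment 0 a" using assms by (auto simp: closed_segment_def)
  then have "f (t *\<^sub>R a) \<in> closed_segment 0 (f a)" using image_closed_segment by blast
  then show ?thesis by (auto simp: closed_segment_def)
next
  case False
  show ?thesis
  proof (cases "a = 0")
    case True
    then show ?thesis by (auto simp: fixes_zero)
  next
    case False
    have "a \<in> closed_segment 0 (t *\<^sub>R a)"
      using \<open>\<not> t \<le> 1\<close> unfolding closed_segment_def by (auto intro!: exI[of _ "1/t"])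
    then have "f a \<in> closed_segment 0 (f (t *\<^sub>R a))" using image_closed_segment by blast
    then obtain k where k: "0 \<le> k" "f a = k *\<^sub>R f (t *\<^sub>R a)" by (auto simp: closed_segment_def)
    moreover have "f a \<noteq> 0" using False fixes_zero injD[OF inj] by metis
    ultimately have "f (t *\<^sub>R a) = (1/k) *\<^sub>R f a" by auto
    then show ?thesis using k(1) by (intro exI[of _ "1/k"]) simp
  qed
qed

definition profile :: "'a \<Rightarrow> real \<Rightarrow> real"
  where "profile u c = f (c *\<^sub>R u) \<bullet> f u"

lemma profile_zero [simp]: "profile u 0 = 0"
  by (simp add: profile_def fixes_zero)

lemma inner_self_image_unit: "norm u = 1 \<Longrightarrow> f u \<bullet> f u = 1"
  by (rule inner_eq_one) (simp add: norm_eq_1)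

lemma image_scaleR_unit:
  assumes "norm u = 1" "0 \<le> c"
  shows "f (c *\<^sub>R u) = profile u c *\<^sub>R f u"
  using image_scaleR_on_ray[OF assms(2), of u] inner_self_image_unit[OF assms(1)]
  by (auto simp: profile_def)

lemma profile_nonneg:
  assumes "norm u = 1" "0 \<le> c"
  shows "0 \<le> profile u c"
  using image_scaleR_on_ray[OF assms(2), of u] inner_self_image_unit[OF assms(1)]
  by (auto simp: profile_def)

lemma profile_mult_inverse:
  assumes "norm u = 1" "0 < c"
  shows "profile u c * profile u (1/c) = 1"
proof -
  have "(c *\<^sub>R u) \<bullet> ((1/c) *\<^sub>R u) = 1" using assms by (simp add: norm_eq_1)
  then have "f (c *\<^sub>R u) \<bullet> f ((1/c) *\<^sub>R u) = 1" by (rule inner_eq_one)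
  then show ?thesis
    using assms by (simp add: image_scaleR_unit inner_self_image_unit mult.commute)
qed

lemma inner_image_unit_pos:
  assumes u: "norm u = 1" and c: "0 < x \<bullet> u"
  shows "f x \<bullet> f u = profile u (x \<bullet> u)"
proof -
  have "x \<bullet> ((1 / (x \<bullet> u)) *\<^sub>R u) = 1" using c by simp
  then have "f x \<bullet> f ((1 / (x \<bullet> u)) *\<^sub>R u) = 1" by (rule inner_eq_one)
  then have "profile u (1 / (x \<bullet> u)) * (f x \<bullet> f u) = 1"
    using assms by (simp add: image_scaleR_unit)
  with profile_mult_inverse[OF assms] show ?thesis
    by (metis mult.commute mult_cancel_left mult_zero_left zero_neq_one)
qed

text \<open>The upper bound comes from the rays: \<open>f x \<bullet> f u\<close> is at most \<open>profile u s\<close> for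
  every \<open>s > 0\<close>, and \<open>profile u s \<rightarrow> 0\<close> as \<open>s \<rightarrow> 0\<close>.\<close>

lemma inner_image_orthogonal:
  assumes u: "norm u = 1" and x: "x \<bullet> u = 0"
  shows "f x \<bullet> f u = 0"
proof -
  have uu: "u \<bullet> u = 1" using u by (simp add: norm_eq_1)
  have "((\<lambda>t. f (x + t *\<^sub>R u) \<bullet> f u) \<longlongrightarrow> f x \<bullet> f u) (at_right 0)"
    by (rule tendsto_eq_intros continuous_on_tendsto_compose[OF continuous] | simp)+
  moreover have "eventually (\<lambda>t. 0 \<le> f (x + t *\<^sub>R u) \<bullet> f u) (at_right 0)"
  proof (rule eventually_at_rightI[of 0 1])
    fix t :: real assume "t \<in> {0<..<1}"
    moreover have "(x + t *\<^sub>R u) \<bullet> u = t" using x uu by (simp add: inner_add_left)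
    ultimately show "0 \<le> f (x + t *\<^sub>R u) \<bullet> f u"
      using inner_image_unit_pos[OF u] profile_nonneg[OF u] by simp
  qed simp
  ultimately have lower: "0 \<le> f x \<bullet> f u" by (rule tendsto_lowerbound) simp
  have "(profile u \<longlongrightarrow> profile u 0) (at_right 0)"
    unfolding profile_def
    by (rule tendsto_eq_intros continuous_on_tendsto_compose[OF continuous] | simp)+
  moreover have "eventually (\<lambda>s. f x \<bullet> f u \<le> profile u s) (at_right 0)"
  proof (rule eventually_at_rightI[of 0 1])
    fix s :: real assume "s \<in> {0<..<1}"
    then have s: "0 < s" by simp
    have "((1/s) *\<^sub>R u) \<bullet> x \<le> 1" using x by (simp add: inner_commute)
    then have "f ((1/s) *\<^sub>R u) \<bullet> f x \<le> 1" using inner_le_one_iff by blast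
    then have "profile u (1/s) * (f x \<bullet> f u) \<le> 1"
      using u s by (simp add: image_scaleR_unit inner_commute)
    then have "profile u s * profile u (1/s) * (f x \<bullet> f u) \<le> profile u s"
      using profile_nonneg[OF u, of s] s
      by (metis mult.assoc mult.right_neutral mult_left_mono less_imp_le)
    then show "f x \<bullet> f u \<le> profile u s" using profile_mult_inverse[OF u s] by simp
  qed simp
  ultimately have "f x \<bullet> f u \<le> profile u 0" by (rule tendsto_lowerbound) simp
  with lower show ?thesis by simp
qed

lemma inner_image_unit:
  assumes "norm u = 1" "0 \<le> x \<bullet> u"
  shows "f x \<bullet> f u = profile u (x \<bullet> u)"
  using assms inner_image_unit_pos inner_image_orthogonal by (cases "x \<bullet> u = 0") auto

lemma profile_eq_if_orthogonal:
  assumes u: "norm u = 1" and v: "norm v = 1" and "u \<bullet> v = 0" and "0 \<le> c"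
  shows "profile u c = profile v c"
proof -
  obtain l where l: "f (c *\<^sub>R (u + v)) = l *\<^sub>R f (u + v)"
    using image_scaleR_on_ray[OF \<open>0 \<le> c\<close>] by blast
  have uu: "u \<bullet> u = 1" and vv: "v \<bullet> v = 1" using u v by (simp_all add: norm_eq_1)
  have "profile w c = l" if w: "norm w = 1" "(u + v) \<bullet> w = 1" for w
  proof -
    have "profile w c = f (c *\<^sub>R (u + v)) \<bullet> f w"
      using inner_image_unit[OF w(1), of "c *\<^sub>R (u + v)"] w(2) \<open>0 \<le> c\<close> by simp
    also have "\<dots> = l * profile w 1"
      using inner_image_unit[OF w(1), of "u + v"] w(2) l by simp
    finally show ?thesis using inner_self_image_unit[OF w(1)] by (simp add: profile_def)
  qed
  moreover have "(u + v) \<bullet> u = 1" "(u + v) \<bullet> v = 1"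
    using uu vv \<open>u \<bullet> v = 0\<close> by (simp_all add: inner_add_left inner_add_right inner_commute)
  ultimately show ?thesis using u v by metis
qed

lemma inner_image_Basis:
  assumes "b \<in> Basis" "b' \<in> Basis"
  shows "f b \<bullet> f b' = (if b = b' then 1 else 0)"
  using assms inner_self_image_unit inner_image_orthogonal by (simp add: inner_Basis)

lemma image_uminus_Basis:
  assumes b: "b \<in> Basis"
  shows "f (- b) = - f b"
proof -
  define c where "c = f (- b) \<bullet> f b"
  have "f (- b) = c *\<^sub>R f b"
  proof (rule orthonormal_image_Basis_eqI[OF inner_image_Basis])
    fix b' :: 'a assume "b' \<in> Basis"
    then show "f (- b) \<bullet> f b' = c *\<^sub>R f b \<bullet> f b'"
      using b inner_image_orthogonal[of b' "- b"] inner_image_Basis[OF b, of b']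
      by (auto simp: c_def inner_Basis)
  qed
  moreover have "f (- b) \<bullet> f (- b) = 1" using b by (simp add: inner_self_image_unit)
  ultimately have "c * c = 1" using inner_image_Basis[OF b b] by simp
  moreover have "c \<noteq> 1"
  proof
    assume "c = 1"
    then have "- b = b" using \<open>f (- b) = c *\<^sub>R f b\<close> injD[OF inj] by simp
    then show False using b nonzero_Basis by (metis eq_neg_iff_add_eq_0 scaleR_2 scaleR_eq_0_iff zero_neq_numeral)
  qed
  ultimately have "c = -1" by (metis square_eq_1_iff)
  then show ?thesis using \<open>f (- b) = c *\<^sub>R f b\<close> by simp
qed

lemma profile_Basis_eq:
  assumes "b \<in> Basis" "b' \<in> Basis" "0 \<le> c"
  shows "profile b c = profile b' c"
  using assms profile_eq_if_orthogonal[of b b' c] by (cases "b = b'") (auto simp: inner_Basis)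

lemma profile_uminus_Basis:
  assumes "DIM('a) \<ge> 2" "b \<in> Basis" "0 \<le> c"
  shows "profile (- b) c = profile b c"
proof -
  obtain b' where b': "b' \<in> Basis" "b' \<noteq> b" using exists_Basis_neq[OF assms(1,2)] by blast
  then have "profile (- b) c = profile b' c"
    using assms by (intro profile_eq_if_orthogonal) (auto simp: inner_Basis)
  also have "\<dots> = profile b c" using b' assms by (intro profile_Basis_eq)
  finally show ?thesis .
qed

lemma image_Basis_pair:
  assumes "i \<in> Basis" "j \<in> Basis" "i \<noteq> j" "0 \<le> g" "0 \<le> d"
  shows "f (g *\<^sub>R i + d *\<^sub>R j) = profile i g *\<^sub>R f i + profile i d *\<^sub>R f j"
proof (rule orthonormal_image_Basis_eqI[OF inner_image_Basis])
  fix b :: 'a assume b: "b \<in> Basis"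
  define x where "x = g *\<^sub>R i + d *\<^sub>R j"
  have xb: "x \<bullet> b = (if b = i then g else if b = j then d else 0)"
    using assms b by (auto simp: x_def inner_add_left inner_Basis)
  then have "f x \<bullet> f b = profile b (x \<bullet> b)"
    using assms b by (intro inner_image_unit) auto
  also have "\<dots> = profile i (x \<bullet> b)"
    using assms b xb by (intro profile_Basis_eq) auto
  also have "\<dots> = (profile i g *\<^sub>R f i + profile i d *\<^sub>R f j) \<bullet> f b"
    using assms b xb by (auto simp: inner_add_left inner_image_Basis)
  finally show "f (g *\<^sub>R i + d *\<^sub>R j) \<bullet> f b = (profile i g *\<^sub>R f i + profile i d *\<^sub>R f j) \<bullet> f b"
    by (simp only: x_def)
qed

lemma profile_add:
  assumes "i \<in> Basis" "j \<in> Basis" "i \<noteq> j" and g: "0 \<le> g" and d: "0 \<le> d"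
  shows "profile i (g + d) = profile i g + profile i d"
proof (cases "g + d = 0")
  case True
  then have "g = 0" "d = 0" using g d by linarith+
  then show ?thesis by simp
next
  case False
  define s where "s = g + d"
  have s: "0 < s" using False g d by (simp add: s_def)
  define a where "a = (1/s) *\<^sub>R i + (1/s) *\<^sub>R j"
  have fa: "f a = profile i (1/s) *\<^sub>R f i + profile i (1/s) *\<^sub>R f j"
    using assms s by (simp add: a_def image_Basis_pair)
  have "a \<bullet> (g *\<^sub>R i + d *\<^sub>R j) = 1" "a \<bullet> (s *\<^sub>R i + 0 *\<^sub>R j) = 1"
    using assms s by (simp_all add: a_def s_def inner_add_left inner_add_right inner_Basis
        add_divide_distrib[symmetric])
  then have "f a \<bullet> f (g *\<^sub>R i + d *\<^sub>R j) = 1" "f a \<bullet> f (s *\<^sub>R i + 0 *\<^sub>R j) = 1"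
    by (simp_all only: inner_eq_one)
  moreover have "f (g *\<^sub>R i + d *\<^sub>R j) = profile i g *\<^sub>R f i + profile i d *\<^sub>R f j"
    by (rule image_Basis_pair) (use assms in auto)
  moreover have "f (s *\<^sub>R i + 0 *\<^sub>R j) = profile i s *\<^sub>R f i + profile i 0 *\<^sub>R f j"
    by (rule image_Basis_pair) (use assms s in auto)
  ultimately have "profile i (1/s) * (profile i g + profile i d) = 1"
    "profile i (1/s) * profile i s = 1"
    using assms by (simp_all add: fa inner_add_left inner_add_right inner_image_Basis algebra_simps)
  then show ?thesis by (metis mult_left_cancel mult_zero_left zero_neq_one s_def)
qed

lemma profile_Basis:
  assumes "DIM('a) \<ge> 2" "b \<in> Basis" "0 \<le> c"
  shows "profile b c = c"
proof -
  obtain b' where b': "b' \<in> Basis" "b' \<noteq> b" using exists_Basis_neq[OF assms(1,2)] by blast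
  show ?thesis
  proof (rule additive_nonneg_eq_id[where H = "profile b", OF _ _ _ assms(3)])
    show "0 \<le> profile b c" if "0 \<le> c" for c
      using assms(2) that by (simp add: profile_nonneg)
    show "profile b 1 = 1"
      using assms(2) by (simp add: profile_def inner_self_image_unit)
    show "profile b (x + y) = profile b x + profile b y" if "0 \<le> x" "0 \<le> y" for x y
      using profile_add[OF assms(2) b'(1) _ that] b'(2) by auto
  qed
qed

lemma inner_image_Basis_right:
  assumes "DIM('a) \<ge> 2" "b \<in> Basis"
  shows "f x \<bullet> f b = x \<bullet> b"
proof (cases "0 \<le> x \<bullet> b")
  case True
  then show ?thesis using assms inner_image_unit[of b x] by (simp add: profile_Basis)
next
  case False
  have "f x \<bullet> f b = - (f x \<bullet> f (- b))" using assms(2) by (simp add: image_uminus_Basis)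
  also have "f x \<bullet> f (- b) = profile (- b) (- (x \<bullet> b))"
    using inner_image_unit[of "- b" x] assms(2) False by simp
  also have "\<dots> = - (x \<bullet> b)"
    using assms False by (simp add: profile_uminus_Basis profile_Basis)
  finally show ?thesis by simp
qed

lemma is_orthogonal_transformation:
  assumes "DIM('a) \<ge> 2"
  shows "orthogonal_transformation f"
proof -
  have "f x \<bullet> f y = x \<bullet> y" for x y
  proof -
    have "f x \<bullet> f y = (\<Sum>b\<in>Basis. (f x \<bullet> f b) * (f y \<bullet> f b))"
      by (rule orthonormal_image_Basis_inner[OF inner_image_Basis])
    also have "\<dots> = (\<Sum>b\<in>Basis. (x \<bullet> b) * (y \<bullet> b))"
      using assms by (intro sum.cong) (simp_all add: inner_image_Basis_right)
    finally show ?thesis by (simp only: euclidean_inner[of x y])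
  qed
  then have "dist (f x) (f y) = dist x y" for x y
    by (simp add: dist_norm norm_eq_sqrt_inner inner_diff_left inner_diff_right inner_commute)
  then show ?thesis by (simp add: orthogonal_transformation_isometry fixes_zero)
qed

end

theorem proposition5p4:
  fixes f :: "real^'n \<Rightarrow> real^'n"
  assumes "CARD('n) \<ge> 2"
    and "continuous_on UNIV f"
    and "inj f"
    and "\<forall>A\<in>K0. closure (f ` polar A) = polar (closure (f ` A))"
  shows "orthogonal_transformation f"
proof -
  interpret polar_preserving f
    using assms(2-4) by unfold_locales auto
  show ?thesis
    using assms(1) by (intro is_orthogonal_transformation) simp
qed

end
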